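(* Let $X$ be a locally compact separable metrizable space, $Z\subseteq X$ compact, and let $\mathcal U=(\mathfrak P,\{\mathcal U_{\mathfrak p}\},\{\Phi_{\mathfrak p\mathfrak q}\})$ be an abstract good coordinate system of $Z$ in the strong sense, with $\mathcal U_{\mathfrak p}=(U_{\mathfrak p},S_{\mathfrak p},\psi_{\mathfrak p})$. Let $|\mathcal U|=(\coprod_{\mathfrak p}U_{\mathfrak p})/\sim$ with the quotient topology. For each $\mathfrak p$ choose an open $U'_{\mathfrak p}\Subset U_{\mathfrak p}$ and denote also by $U'_{\mathfrak p}$ its image under the natural map $U_{\mathfrak p}\to|\mathcal U|$. Then $U'=\bigcup_{\mathfrak p\in\mathfrak P}U'_{\mathfrak p}\subseteq|\mathcal U|$, equipped with the subspace topology induced from $|\mathcal U|$, is separable and metrizable.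
   Context: An abstract K-chart of $X$ is a triple $(U,S,\psi)$ where $U$ is a locally compact separable metrizable space, $S\subseteq U$ is closed, and $\psi:S\to X$ is a homeomorphism onto an open subset of $X$. Given abstract K-charts $\mathcal U_i=(U_i,S_i,\psi_i)$ ($i=1,2$), a coordinate change from $\mathcal U_1$ to $\mathcal U_2$ is a pair $(U_{21},\varphi_{21})$ with: (1) $U_{21}\subseteq U_1$ open; (2) $\varphi_{21}:U_{21}\to U_2$ a topological embedding; (3) $S_1\cap U_{21}=\varphi_{21}^{-1}(S_2)$ and $\psi_2\circ\varphi_{21}=\psi_1$ on $S_1\cap U_{21}$; (4) $\psi_1(S_1\cap U_{21})=\psi_1(S_1)\cap\psi_2(S_2)$. An abstract good coordinate system of $Z$ in the weak sense is $(\mathfrak P,\{\mathcal U_{\mathfrak p}\},\{\Phi_{\mathfrak p\mathfrak q}\})$ where: (1) $\mathfrak P$ is a finite partially ordered set; (2) each $\mathcal U_{\mathfrak p}=(U_{\mathfrak p},S_{\mathfrak p},\psi_{\mathfrak p})$ is an abstract K-chart; (3) for $\mathfrak q\le\mathfrak p$, $\Phi_{\mathfrak p\mathfrak q}=(U_{\mathfrak p\mathfrak q},\varphi_{\mathfrak p\mathfrak q})$ is a coordinate change from $\mathcal U_{\mathfrak q}$ to $\mathcal U_{\mathfrak p}$, with $U_{\mathfrak p\mathfrak p}=U_{\mathfrak p}$ and $\varphi_{\mathfrak p\mathfrak p}=\mathrm{id}$; (4) if $\mathfrak r\le\mathfrak q\le\mathfrak p$ then $\varphi_{\mathfrak p\mathfrak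 r}=\varphi_{\mathfrak p\mathfrak q}\circ\varphi_{\mathfrak q\mathfrak r}$ on $\varphi_{\mathfrak q\mathfrak r}^{-1}(U_{\mathfrak p\mathfrak q})\cap U_{\mathfrak p\mathfrak r}$; (5) if $\psi_{\mathfrak p}(S_{\mathfrak p})\cap\psi_{\mathfrak q}(S_{\mathfrak q})\neq\emptyset$ then $\mathfrak p\le\mathfrak q$ or $\mathfrak q\le\mathfrak p$; (6) $\bigcup_{\mathfrak p}\psi_{\mathfrak p}(S_{\mathfrak p})\supseteq Z$. On $\coprod_{\mathfrak p}U_{\mathfrak p}$ define a relation $\sim$: for $x\in U_{\mathfrak p}$, $y\in U_{\mathfrak q}$, $x\sim y$ iff (a) $\mathfrak p=\mathfrak q$ and $x=y$, or (b) $\mathfrak p\le\mathfrak q$, $x\in U_{\mathfrak q\mathfrak p}$ and $y=\varphi_{\mathfrak q\mathfrak p}(x)$, or (c) $\mathfrak q\le\mathfrak p$, $y\in U_{\mathfrak p\mathfrak q}$ and $x=\varphi_{\mathfrak p\mathfrak q}(y)$. The system is an abstract good coordinate system of $Z$ in the strong sense if it is one in the weak sense and moreover $\sim$ is an equivalence relation and the quotient $(\coprod_{\mathfrak p}U_{\mathfrak p})/\sim$ with the quotient topology is Hausdorff. For an open subset $V$ of a separable metrizable space $U$, $V\Subset U$ means the closure of $V$ in $U$ is compact. *)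

theory Defs
  imports "HOL-Analysis.Analysis"
begin

definition qclass :: "'a topology \<Rightarrow> ('a \<Rightarrow> 'a \<Rightarrow> bool) \<Rightarrow> 'a \<Rightarrow> 'a set" where
  "qclass X r x = {y \<in> topspace X. r x y}"

lemma istopology_quotient:
  "istopology (\<lambda>T. T \<subseteq> qclass X r ` topspace X \<and>
                   openin X {x \<in> topspace X. qclass X r x \<in> T})"
  unfolding istopology_def
proof (rule conjI; intro allI impI)
  fix S T :: "'a set set"
  assume a: "S \<subseteq> qclass X r ` topspace X \<and> openin X {x \<in> topspace X. qclass X r x \<in> S}"
     and b: "T \<subseteq> qclass X r ` topspace X \<and> openin X {x \<in> topspace X. qclass X r x \<in> T}"
  have "{x \<in> topspace X. qclass X r x \<in> S \<inter> T} =
        {x \<in> topspace X. qclass X r x \<in> S} \<inter> {x \<in> topspace X. qclass X r x \<in> T}" by blast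
  moreover have "openin X ({x \<in> topspace X. qclass X r x \<in> S} \<inter> {x \<in> topspace X. qclass X r x \<in> T})"
    using a b by (intro openin_Int) auto
  ultimately show "S \<inter> T \<subseteq> qclass X r ` topspace X \<and> openin X {x \<in> topspace X. qclass X r x \<in> S \<inter> T}"
    using a by auto
next
  fix K :: "'a set set set"
  assume k: "\<forall>S\<in>K. S \<subseteq> qclass X r ` topspace X \<and> openin X {x \<in> topspace X. qclass X r x \<in> S}"
  have "{x \<in> topspace X. qclass X r x \<in> \<Union>K} = (\<Union>S\<in>K. {x \<in> topspace X. qclass X r x \<in> S})" by blast
  moreover have "openin X (\<Union>S\<in>K. {x \<in> topspace X. qclass X r x \<in> S})"
    using k by (intro openin_Union) auto
  ultimately show "\<Union>K \<subseteq> qclass X r ` topspace X \<and> openin X {x \<in> topspace X. qclass X r x \<in> \<Union>K}"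
    using k by auto
qed

text \<open>Quotient of X by r (meant for an equivalence relation r on topspace X):
  points are the classes, a set of classes is open iff its preimage is open.\<close>
definition quotient_topology :: "'a topology \<Rightarrow> ('a \<Rightarrow> 'a \<Rightarrow> bool) \<Rightarrow> 'a set topology" where
  "quotient_topology X r = topology (\<lambda>T. T \<subseteq> qclass X r ` topspace X \<and>
                   openin X {x \<in> topspace X. qclass X r x \<in> T})"

definition lcsm_space :: "'a topology \<Rightarrow> bool" where
  "lcsm_space U \<longleftrightarrow> locally_compact_space U \<and> separable_space U \<and> metrizable_space U"

definition abstract_K_chart :: "'x topology \<Rightarrow> 'a topology \<Rightarrow> 'a set \<Rightarrow> ('a \<Rightarrow> 'x) \<Rightarrow> bool" where
  "abstract_K_chart X U S psi \<longleftrightarrow>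
     lcsm_space U \<and> closedin U S \<and>
     homeomorphic_map (subtopology U S) (subtopology X (psi ` S)) psi \<and>
     openin X (psi ` S)"

definition coordinate_change ::
  "'a topology \<Rightarrow> 'a set \<Rightarrow> ('a \<Rightarrow> 'x) \<Rightarrow> 'a topology \<Rightarrow> 'a set \<Rightarrow> ('a \<Rightarrow> 'x)
   \<Rightarrow> 'a set \<Rightarrow> ('a \<Rightarrow> 'a) \<Rightarrow> bool" where
  "coordinate_change U1 S1 psi1 U2 S2 psi2 U21 phi21 \<longleftrightarrow>
     openin U1 U21 \<and>
     embedding_map (subtopology U1 U21) U2 phi21 \<and>
     S1 \<inter> U21 = {x \<in> U21. phi21 x \<in> S2} \<and>
     (\<forall>x \<in> S1 \<inter> U21. psi2 (phi21 x) = psi1 x) \<and>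
     psi1 ` (S1 \<inter> U21) = psi1 ` S1 \<inter> psi2 ` S2"

text \<open>The index poset is
  (P, le); the chart at p is (U p, S p, psi p); for q \<le> p the coordinate change
  Phi_pq from U_q to U_p is (Upq p q, phi p q).\<close>
definition good_coord_system_weak ::
  "'x topology \<Rightarrow> 'x set \<Rightarrow> 'p set \<Rightarrow> ('p \<Rightarrow> 'p \<Rightarrow> bool) \<Rightarrow> ('p \<Rightarrow> 'a topology)
   \<Rightarrow> ('p \<Rightarrow> 'a set) \<Rightarrow> ('p \<Rightarrow> 'a \<Rightarrow> 'x) \<Rightarrow> ('p \<Rightarrow> 'p \<Rightarrow> 'a set) \<Rightarrow> ('p \<Rightarrow> 'p \<Rightarrow> 'a \<Rightarrow> 'a)
   \<Rightarrow> bool" where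
  "good_coord_system_weak X Z P le U S psi Upq phi \<longleftrightarrow>
     finite P \<and>
     (\<forall>p\<in>P. le p p) \<and>
     (\<forall>p\<in>P. \<forall>q\<in>P. le p q \<and> le q p \<longrightarrow> p = q) \<and>
     (\<forall>p\<in>P. \<forall>q\<in>P. \<forall>r\<in>P. le p q \<and> le q r \<longrightarrow> le p r) \<and>
     (\<forall>p\<in>P. abstract_K_chart X (U p) (S p) (psi p)) \<and>
     (\<forall>p\<in>P. \<forall>q\<in>P. le q p \<longrightarrow>
        coordinate_change (U q) (S q) (psi q) (U p) (S p) (psi p) (Upq p q) (phi p q)) \<and>
     (\<forall>p\<in>P. Upq p p = topspace (U p) \<and> (\<forall>x \<in> topspace (U p). phi p p x = x)) \<and>
     (\<forall>p\<in>P. \<forall>q\<in>P. \<forall>r\<in>P. le r q \<and> le q p \<longrightarrow>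
        (\<forall>x \<in> {x \<in> Upq q r. phi q r x \<in> Upq p q} \<inter> Upq p r.
           phi p r x = phi p q (phi q r x))) \<and>
     (\<forall>p\<in>P. \<forall>q\<in>P. psi p ` S p \<inter> psi q ` S q \<noteq> {} \<longrightarrow> le p q \<or> le q p) \<and>
     Z \<subseteq> (\<Union>p\<in>P. psi p ` S p)"

definition gcs_rel ::
  "'p set \<Rightarrow> ('p \<Rightarrow> 'p \<Rightarrow> bool) \<Rightarrow> ('p \<Rightarrow> 'a topology) \<Rightarrow> ('p \<Rightarrow> 'p \<Rightarrow> 'a set)
   \<Rightarrow> ('p \<Rightarrow> 'p \<Rightarrow> 'a \<Rightarrow> 'a) \<Rightarrow> 'p \<times> 'a \<Rightarrow> 'p \<times> 'a \<Rightarrow> bool" where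
  "gcs_rel P le U Upq phi = (\<lambda>(p, x) (q, y).
     p \<in> P \<and> q \<in> P \<and> x \<in> topspace (U p) \<and> y \<in> topspace (U q) \<and>
     ((p = q \<and> x = y) \<or>
      (le p q \<and> x \<in> Upq q p \<and> y = phi q p x) \<or>
      (le q p \<and> y \<in> Upq p q \<and> x = phi p q y)))"

definition gcs_disjoint_union :: "'p set \<Rightarrow> ('p \<Rightarrow> 'a topology) \<Rightarrow> ('p \<times> 'a) topology" where
  "gcs_disjoint_union P U = sum_topology U P"

definition gcs_quotient ::
  "'p set \<Rightarrow> ('p \<Rightarrow> 'p \<Rightarrow> bool) \<Rightarrow> ('p \<Rightarrow> 'a topology) \<Rightarrow> ('p \<Rightarrow> 'p \<Rightarrow> 'a set)
   \<Rightarrow> ('p \<Rightarrow> 'p \<Rightarrow> 'a \<Rightarrow> 'a) \<Rightarrow> ('p \<times> 'a) set topology" where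
  "gcs_quotient P le U Upq phi =
     quotient_topology (gcs_disjoint_union P U) (gcs_rel P le U Upq phi)"

definition gcs_proj ::
  "'p set \<Rightarrow> ('p \<Rightarrow> 'p \<Rightarrow> bool) \<Rightarrow> ('p \<Rightarrow> 'a topology) \<Rightarrow> ('p \<Rightarrow> 'p \<Rightarrow> 'a set)
   \<Rightarrow> ('p \<Rightarrow> 'p \<Rightarrow> 'a \<Rightarrow> 'a) \<Rightarrow> 'p \<Rightarrow> 'a \<Rightarrow> ('p \<times> 'a) set" where
  "gcs_proj P le U Upq phi p x = qclass (gcs_disjoint_union P U) (gcs_rel P le U Upq phi) (p, x)"

definition good_coord_system_strong ::
  "'x topology \<Rightarrow> 'x set \<Rightarrow> 'p set \<Rightarrow> ('p \<Rightarrow> 'p \<Rightarrow> bool) \<Rightarrow> ('p \<Rightarrow> 'a topology)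
   \<Rightarrow> ('p \<Rightarrow> 'a set) \<Rightarrow> ('p \<Rightarrow> 'a \<Rightarrow> 'x) \<Rightarrow> ('p \<Rightarrow> 'p \<Rightarrow> 'a set) \<Rightarrow> ('p \<Rightarrow> 'p \<Rightarrow> 'a \<Rightarrow> 'a)
   \<Rightarrow> bool" where
  "good_coord_system_strong X Z P le U S psi Upq phi \<longleftrightarrow>
     good_coord_system_weak X Z P le U S psi Upq phi \<and>
     equiv (topspace (gcs_disjoint_union P U)) {(a, b). gcs_rel P le U Upq phi a b} \<and>
     Hausdorff_space (gcs_quotient P le U Upq phi)"

definition rel_compact_open :: "'a topology \<Rightarrow> 'a set \<Rightarrow> bool" where
  "rel_compact_open U V \<longleftrightarrow> openin U V \<and> compactin U (U closure_of V)"

end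

theory Submission
  imports Defs
begin

(* The natural maps U_p -> |U| are continuous and |U| is Hausdorff, so the union K of the images
   of the compact closures of the U'_p is a compact Hausdorff space containing U'.  Choosing
   countable bases B_p of the separable metrizable charts, the images of the sets cl(b) \<inter> cl(U'_p),
   b \<in> B_p, form a countable family of closed subsets of K that separates points.  Urysohn functions
   for its disjoint pairs give a continuous injection of K into \<real>^\<nat>, an embedding by compactness;
   so K, and with it U', is metrizable and second countable. *)

lemma (in Metric_space) separable_imp_second_countable:
  assumes "separable_space mtopology"
  shows "second_countable mtopology"
proof -
  obtain D where D: "countable D" "D \<subseteq> M" "mtopology closure_of D = M"
    using assms unfolding separable_space_def by auto
  define \<B> where "\<B> = (\<Union>y\<in>D. range (\<lambda>n::nat. mball y (1 / Suc n)))"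
  have "countable \<B>"
    unfolding \<B>_def using D(1) by (intro countable_UN countable_image) auto
  moreover have "\<forall>b\<in>\<B>. openin mtopology b"
    unfolding \<B>_def by blast
  moreover have "\<exists>b\<in>\<B>. a \<in> b \<and> b \<subseteq> W" if W: "openin mtopology W" "a \<in> W" for W a
  proof -
    obtain e where e: "e > 0" "mball a e \<subseteq> W"
      using W openin_mtopology by blast
    obtain n :: nat where n: "1 / Suc n < e / 2"
      using e(1) half_gt_zero nat_approx_posE by blast
    have "a \<in> M"
      using W openin_mtopology by blast
    then have "a \<in> mtopology closure_of D"
      using D(3) by simp
    then obtain y where "y \<in> D" "y \<in> mball a (1 / Suc n)"
      unfolding metric_closure_of by (auto dest: spec[of _ "1 / Suc n"])
    then have y: "y \<in> D" "d a y < 1 / Suc n"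
      by auto
    then have "mball y (1 / Suc n) \<subseteq> mball a e"
      using n \<open>a \<in> M\<close> D(2) by (intro mball_subset) (auto simp: commute)
    moreover have "a \<in> mball y (1 / Suc n)"
      using y \<open>a \<in> M\<close> D(2) by (auto simp: commute)
    moreover have "mball y (1 / Suc n) \<in> \<B>"
      unfolding \<B>_def using y(1) by blast
    ultimately show ?thesis
      using e(2) by blast
  qed
  ultimately show ?thesis
    unfolding second_countable_def by blast
qed

lemma separable_metrizable_imp_second_countable:
  "metrizable_space X \<Longrightarrow> separable_space X \<Longrightarrow> second_countable X"
  by (metis Metric_space.separable_imp_second_countable metrizable_space_def)

lemma regular_second_countable_closure_base:
  assumes "regular_space X" "second_countable X"
  shows "\<exists>\<B>. countable \<B> \<and> (\<forall>b\<in>\<B>. openin X b) \<and>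
           (\<forall>W x. openin X W \<longrightarrow> x \<in> W \<longrightarrow> (\<exists>b\<in>\<B>. x \<in> b \<and> X closure_of b \<subseteq> W))"
proof -
  obtain \<B> where \<B>: "countable \<B>" "\<forall>b\<in>\<B>. openin X b"
    and base: "\<And>W x. openin X W \<Longrightarrow> x \<in> W \<Longrightarrow> \<exists>b\<in>\<B>. x \<in> b \<and> b \<subseteq> W"
    using assms(2) unfolding second_countable_def by metis
  have "\<exists>b\<in>\<B>. x \<in> b \<and> X closure_of b \<subseteq> W" if W: "openin X W" "x \<in> W" for W x
  proof -
    have "neighbourhood_base_of (closedin X) X"
      using assms(1) neighbourhood_base_of_closedin by blast
    then obtain V C where "openin X V" "closedin X C" "x \<in> V" "V \<subseteq> C" "C \<subseteq> W"
      using W unfolding neighbourhood_base_of by meson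
    moreover obtain b where "b \<in> \<B>" "x \<in> b" "b \<subseteq> V"
      using base[OF \<open>openin X V\<close> \<open>x \<in> V\<close>] by blast
    ultimately have "X closure_of b \<subseteq> W"
      using closure_of_minimal[of b C X] by blast
    with \<open>b \<in> \<B>\<close> \<open>x \<in> b\<close> show ?thesis
      by blast
  qed
  with \<B> show ?thesis
    by blast
qed

lemma second_countable_powertop_real:
  "second_countable (powertop_real (UNIV :: nat set))"
proof -
  obtain \<B> :: "(nat \<Rightarrow> real) set set" where \<B>: "countable \<B>" "topological_basis \<B>"
    using ex_countable_basis by blast
  show ?thesis
    unfolding euclidean_product_topology second_countable_def
    using \<B> topological_basis_open[OF \<B>(2)] topological_basisE[OF \<B>(2)]
    by (metis open_openin)
qed

lemma compact_continuous_injection_imp_metrizable_second_countable: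
  assumes "compact_space Y" "continuous_map Y Z g" "inj_on g (topspace Y)"
    and "metrizable_space Z" "second_countable Z"
  shows "metrizable_space Y \<and> second_countable Y"
proof -
  have "closed_map Y Z g"
    using assms by (simp add: continuous_imp_closed_map_gen Hausdorff_imp_kc_space
        metrizable_imp_Hausdorff_space)
  then have "Y homeomorphic_space subtopology Z (g ` topspace Y)"
    using assms(2,3) by (intro embedding_map_imp_homeomorphic_space injective_closed_imp_embedding_map)
  moreover have "metrizable_space (subtopology Z (g ` topspace Y))"
    using assms(4) by (rule metrizable_space_subtopology)
  moreover have "second_countable (subtopology Z (g ` topspace Y))"
    using assms(5) by (rule second_countable_subtopology)
  ultimately show ?thesis
    using homeomorphic_metrizable_space homeomorphic_space_second_countability by blast
qed

lemma normal_space_inj_powertop_real: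
  assumes "normal_space Y" "countable \<E>" "\<And>E. E \<in> \<E> \<Longrightarrow> closedin Y E"
    and separating: "\<And>x y. \<lbrakk>x \<in> topspace Y; y \<in> topspace Y; x \<noteq> y\<rbrakk>
                    \<Longrightarrow> \<exists>E\<in>\<E>. \<exists>F\<in>\<E>. disjnt E F \<and> x \<in> E \<and> y \<in> F"
  obtains g where "continuous_map Y (powertop_real (UNIV :: nat set)) g" "inj_on g (topspace Y)"
proof -
  define J where "J = {(E, F) \<in> \<E> \<times> \<E>. disjnt E F}"
  have "countable J"
    by (rule countable_subset[OF _ countable_SIGMA[OF assms(2) assms(2)]]) (auto simp: J_def)
  have "\<exists>h. continuous_map Y euclideanreal h \<and> (j \<in> J \<longrightarrow> h ` fst j \<subseteq> {0} \<and> h ` snd j \<subseteq> {1})"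
    for j
  proof (cases "j \<in> J")
    case True
    then have "closedin Y (fst j)" "closedin Y (snd j)" "disjnt (fst j) (snd j)"
      using assms(3) by (auto simp: J_def)
    then obtain h where "continuous_map Y euclideanreal h" "h ` fst j \<subseteq> {0}" "h ` snd j \<subseteq> {1}"
      by (rule Urysohn_lemma_alt[OF assms(1)])
    then show ?thesis
      by blast
  next
    case False
    then show ?thesis
      by (intro exI[of _ "\<lambda>_. 0"]) simp
  qed
  \<comment> \<open>h j is chosen for every j, not only for j \<in> J, so that g is continuous even if J = {}\<close>
  then obtain h where h: "\<And>j. continuous_map Y euclideanreal (h j)"
    "\<And>j. j \<in> J \<Longrightarrow> h j ` fst j \<subseteq> {0} \<and> h j ` snd j \<subseteq> {1}"
    by metis
  define g where "g = (\<lambda>y n. h (from_nat_into J n) y)"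
  have "continuous_map Y (powertop_real UNIV) g"
    unfolding g_def continuous_map_componentwise_UNIV using h(1) by blast
  moreover have "inj_on g (topspace Y)"
  proof (rule inj_onI, rule ccontr)
    fix x y
    assume "x \<in> topspace Y" "y \<in> topspace Y" "g x = g y" "x \<noteq> y"
    then obtain E F where "(E, F) \<in> J" "x \<in> E" "y \<in> F"
      using separating unfolding J_def by blast
    define n where "n = to_nat_on J (E, F)"
    have "from_nat_into J n = (E, F)"
      unfolding n_def using \<open>countable J\<close> \<open>(E, F) \<in> J\<close> by (rule from_nat_into_to_nat_on)
    then have "g x n = 0" "g y n = 1"
      using h(2)[OF \<open>(E, F) \<in> J\<close>] \<open>x \<in> E\<close> \<open>y \<in> F\<close> by (auto simp: g_def)
    with \<open>g x = g y\<close> show False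
      by simp
  qed
  ultimately show ?thesis
    using that by blast
qed

lemma countable_closed_network_Union_compact_images:
  fixes f :: "'p \<Rightarrow> 'a \<Rightarrow> 'b"
  assumes "Hausdorff_space Q" "finite P"
    and cont: "\<And>p. p \<in> P \<Longrightarrow> continuous_map (U p) Q (f p)"
    and "\<And>p. p \<in> P \<Longrightarrow> regular_space (U p)" "\<And>p. p \<in> P \<Longrightarrow> second_countable (U p)"
    and compact: "\<And>p. p \<in> P \<Longrightarrow> compactin (U p) (C p)"
  defines "K \<equiv> \<Union>p\<in>P. f p ` C p"
  obtains \<E> where "countable \<E>" "\<And>E. E \<in> \<E> \<Longrightarrow> closedin Q E \<and> E \<subseteq> K"
    "\<And>x V. \<lbrakk>x \<in> K; openin Q V; x \<in> V\<rbrakk> \<Longrightarrow> \<exists>E\<in>\<E>. x \<in> E \<and> E \<subseteq> V"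
proof -
  have "\<forall>p\<in>P. \<exists>\<B>. countable \<B> \<and> (\<forall>b\<in>\<B>. openin (U p) b) \<and>
          (\<forall>W x. openin (U p) W \<longrightarrow> x \<in> W \<longrightarrow> (\<exists>b\<in>\<B>. x \<in> b \<and> U p closure_of b \<subseteq> W))"
    using assms(4,5) regular_second_countable_closure_base by blast
  then obtain \<B> where \<B>: "\<And>p. p \<in> P \<Longrightarrow> countable (\<B> p)"
    "\<And>p b. p \<in> P \<Longrightarrow> b \<in> \<B> p \<Longrightarrow> openin (U p) b"
    "\<And>p W x. p \<in> P \<Longrightarrow> openin (U p) W \<Longrightarrow> x \<in> W \<Longrightarrow> \<exists>b\<in>\<B> p. x \<in> b \<and> U p closure_of b \<subseteq> W"
    by metis
  define \<E> where "\<E> = (\<Union>p\<in>P. (\<lambda>b. f p ` (U p closure_of b \<inter> C p)) ` \<B> p)"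
  have "countable \<E>"
    unfolding \<E>_def by (rule countable_UN[OF countable_finite[OF assms(2)] countable_image[OF \<B>(1)]])
  moreover have closed: "closedin Q E \<and> E \<subseteq> K" if "E \<in> \<E>" for E
  proof -
    obtain p b where "p \<in> P" and E: "E = f p ` (U p closure_of b \<inter> C p)"
      using \<open>E \<in> \<E>\<close> unfolding \<E>_def by blast
    have "compactin (U p) (U p closure_of b \<inter> C p)"
      by (rule closed_Int_compactin[OF closedin_closure_of compact[OF \<open>p \<in> P\<close>]])
    then have "closedin Q E"
      unfolding E by (rule compactin_imp_closedin[OF assms(1) image_compactin[OF _ cont[OF \<open>p \<in> P\<close>]]])
    moreover have "E \<subseteq> K"
      unfolding E K_def using \<open>p \<in> P\<close> by blast
    ultimately show ?thesis
      by blast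
  qed
  moreover have network: "\<exists>E\<in>\<E>. x \<in> E \<and> E \<subseteq> V" if "x \<in> K" "openin Q V" "x \<in> V" for x V
  proof -
    obtain p a where "p \<in> P" "a \<in> C p" and x: "x = f p a"
      using \<open>x \<in> K\<close> unfolding K_def by blast
    define V' where "V' = {z \<in> topspace (U p). f p z \<in> V}"
    have "openin (U p) V'"
      unfolding V'_def using openin_continuous_map_preimage[OF cont[OF \<open>p \<in> P\<close>] \<open>openin Q V\<close>] .
    moreover have "a \<in> V'"
      unfolding V'_def using compactin_subset_topspace[OF compact[OF \<open>p \<in> P\<close>]] \<open>a \<in> C p\<close>
        \<open>x \<in> V\<close> x by auto
    ultimately obtain b where "b \<in> \<B> p" "a \<in> b" "U p closure_of b \<subseteq> V'"
      using \<B>(3)[OF \<open>p \<in> P\<close>] by meson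
    moreover have "a \<in> U p closure_of b"
      using closure_of_subset[OF openin_subset[OF \<B>(2)[OF \<open>p \<in> P\<close> \<open>b \<in> \<B> p\<close>]]] \<open>a \<in> b\<close>
      by blast
    ultimately show ?thesis
    proof (intro bexI conjI)
      show "f p ` (U p closure_of b \<inter> C p) \<in> \<E>"
        unfolding \<E>_def using \<open>p \<in> P\<close> \<open>b \<in> \<B> p\<close> by blast
    qed (use \<open>a \<in> C p\<close> x V'_def in auto)
  qed
  ultimately show ?thesis
    by (rule that)
qed

lemma metrizable_second_countable_Union_compact_images:
  fixes f :: "'p \<Rightarrow> 'a \<Rightarrow> 'b"
  assumes "Hausdorff_space Q" "finite P"
    and cont: "\<And>p. p \<in> P \<Longrightarrow> continuous_map (U p) Q (f p)"
    and "\<And>p. p \<in> P \<Longrightarrow> regular_space (U p)" "\<And>p. p \<in> P \<Longrightarrow> second_countable (U p)"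
    and compact: "\<And>p. p \<in> P \<Longrightarrow> compactin (U p) (C p)"
  defines "K \<equiv> \<Union>p\<in>P. f p ` C p"
  shows "metrizable_space (subtopology Q K) \<and> second_countable (subtopology Q K)"
proof -
  have "compactin Q K"
    unfolding K_def using assms(2)
    by (intro compactin_Union finite_imageI) (auto intro: image_compactin[OF compact cont])
  then have topspace_K: "topspace (subtopology Q K) = K"
    using compactin_subset_topspace by auto
  have "compact_space (subtopology Q K)"
    using \<open>compactin Q K\<close> compact_space_subtopology by blast
  then have normal: "normal_space (subtopology Q K)"
    using assms(1) Hausdorff_space_subtopology compact_Hausdorff_or_regular_imp_normal_space by blast
  obtain \<E> where "countable \<E>" and \<E>: "\<And>E. E \<in> \<E> \<Longrightarrow> closedin Q E \<and> E \<subseteq> K"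
    and network: "\<And>x V. \<lbrakk>x \<in> K; openin Q V; x \<in> V\<rbrakk> \<Longrightarrow> \<exists>E\<in>\<E>. x \<in> E \<and> E \<subseteq> V"
    using countable_closed_network_Union_compact_images[where U = U and f = f and C = C, OF assms(1-6),
        folded K_def]
    by blast
  have closed: "closedin (subtopology Q K) E" if "E \<in> \<E>" for E
    using \<E>[OF that] closedin_subset_topspace by blast
  have separating: "\<exists>E\<in>\<E>. \<exists>F\<in>\<E>. disjnt E F \<and> x \<in> E \<and> y \<in> F"
    if "x \<in> topspace (subtopology Q K)" "y \<in> topspace (subtopology Q K)" "x \<noteq> y" for x y
  proof -
    have "x \<in> K" "y \<in> K" "x \<in> topspace Q" "y \<in> topspace Q"
      using that by auto
    then obtain V W where "openin Q V" "openin Q W" "x \<in> V" "y \<in> W" "disjnt V W"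
      using assms(1) \<open>x \<noteq> y\<close> unfolding Hausdorff_space_def by metis
    obtain E where "E \<in> \<E>" "x \<in> E" "E \<subseteq> V"
      using network[OF \<open>x \<in> K\<close> \<open>openin Q V\<close> \<open>x \<in> V\<close>] by blast
    moreover obtain F where "F \<in> \<E>" "y \<in> F" "F \<subseteq> W"
      using network[OF \<open>y \<in> K\<close> \<open>openin Q W\<close> \<open>y \<in> W\<close>] by blast
    ultimately show ?thesis
      using \<open>disjnt V W\<close> disjnt_subset1 disjnt_subset2 by metis
  qed
  obtain g where g: "continuous_map (subtopology Q K) (powertop_real (UNIV :: nat set)) g"
    "inj_on g (topspace (subtopology Q K))"
    by (rule normal_space_inj_powertop_real[OF normal \<open>countable \<E>\<close> closed separating])
  have "metrizable_space (powertop_real (UNIV :: nat set))"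
    by (simp add: metrizable_space_product_topology metrizable_space_euclidean)
  then show ?thesis
    by (rule compact_continuous_injection_imp_metrizable_second_countable[OF
          \<open>compact_space (subtopology Q K)\<close> g _ second_countable_powertop_real])
qed

lemma separable_metrizable_subtopology_subset:
  assumes "metrizable_space (subtopology X K)" "second_countable (subtopology X K)" "T \<subseteq> K"
  shows "separable_space (subtopology X T) \<and> metrizable_space (subtopology X T)"
proof -
  have eq: "subtopology X T = subtopology (subtopology X K) T"
    using assms(3) by (simp add: subtopology_subtopology Int_absorb1)
  have "second_countable (subtopology X T)"
    unfolding eq using assms(2) by (rule second_countable_subtopology)
  moreover have "metrizable_space (subtopology X T)"
    unfolding eq using assms(1) by (rule metrizable_space_subtopology)
  ultimately show ?thesis
    by (simp add: second_countable_imp_separable_space)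
qed

lemma openin_quotient_topology:
  "openin (quotient_topology X r) =
     (\<lambda>T. T \<subseteq> qclass X r ` topspace X \<and> openin X {x \<in> topspace X. qclass X r x \<in> T})"
  unfolding quotient_topology_def by (rule topology_inverse'[OF istopology_quotient])

lemma continuous_map_qclass: "continuous_map X (quotient_topology X r) (qclass X r)"
proof -
  have "openin (quotient_topology X r) (qclass X r ` topspace X)"
  proof -
    have "{x \<in> topspace X. qclass X r x \<in> qclass X r ` topspace X} = topspace X"
      by auto
    then show ?thesis
      unfolding openin_quotient_topology by simp
  qed
  then have "qclass X r ` topspace X \<subseteq> topspace (quotient_topology X r)"
    by (rule openin_subset)
  then show ?thesis
    unfolding continuous_map_def openin_quotient_topology by auto
qed

lemma continuous_map_gcs_proj:
  assumes "p \<in> P"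
  shows "continuous_map (U p) (gcs_quotient P le U Upq phi) (gcs_proj P le U Upq phi p)"
proof -
  have "gcs_proj P le U Upq phi p = qclass (gcs_disjoint_union P U) (gcs_rel P le U Upq phi) \<circ> Pair p"
    by (simp add: fun_eq_iff gcs_proj_def)
  moreover have "continuous_map (U p) (gcs_disjoint_union P U) (Pair p)"
    unfolding gcs_disjoint_union_def using assms by (rule continuous_map_component_injection)
  ultimately show ?thesis
    unfolding gcs_quotient_def by (simp add: continuous_map_compose continuous_map_qclass)
qed

lemma good_coord_system_strongD:
  assumes "good_coord_system_strong X Z P le U S psi Upq phi"
  shows "finite P" "Hausdorff_space (gcs_quotient P le U Upq phi)"
    and "p \<in> P \<Longrightarrow> regular_space (U p)" "p \<in> P \<Longrightarrow> second_countable (U p)"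
proof -
  have weak: "good_coord_system_weak X Z P le U S psi Upq phi"
    using assms unfolding good_coord_system_strong_def by blast
  then show "finite P"
    by (simp add: good_coord_system_weak_def)
  show "Hausdorff_space (gcs_quotient P le U Upq phi)"
    using assms by (simp add: good_coord_system_strong_def)
  assume "p \<in> P"
  with weak have "abstract_K_chart X (U p) (S p) (psi p)"
    by (simp add: good_coord_system_weak_def)
  then have "metrizable_space (U p)" "separable_space (U p)"
    by (simp_all add: abstract_K_chart_def lcsm_space_def)
  then show "regular_space (U p)" "second_countable (U p)"
    by (simp_all add: metrizable_imp_regular_space separable_metrizable_imp_second_countable)
qed

theorem proposition2p11:
  fixes X :: "'x topology" and Z :: "'x set" and P :: "'p set"
    and le :: "'p \<Rightarrow> 'p \<Rightarrow> bool" and U :: "'p \<Rightarrow> 'a topology"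
    and S :: "'p \<Rightarrow> 'a set" and psi :: "'p \<Rightarrow> 'a \<Rightarrow> 'x"
    and Upq :: "'p \<Rightarrow> 'p \<Rightarrow> 'a set" and phi :: "'p \<Rightarrow> 'p \<Rightarrow> 'a \<Rightarrow> 'a"
    and U' :: "'p \<Rightarrow> 'a set"
  assumes "lcsm_space X"
    and "compactin X Z"
    and "good_coord_system_strong X Z P le U S psi Upq phi"
    and "\<forall>p\<in>P. rel_compact_open (U p) (U' p)"
  shows "separable_space (subtopology (gcs_quotient P le U Upq phi)
            (\<Union>p\<in>P. gcs_proj P le U Upq phi p ` U' p))
       \<and> metrizable_space (subtopology (gcs_quotient P le U Upq phi)
            (\<Union>p\<in>P. gcs_proj P le U Upq phi p ` U' p))"
proof -
  let ?Q = "gcs_quotient P le U Upq phi" and ?\<pi> = "gcs_proj P le U Upq phi"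
  let ?T = "\<Union>p\<in>P. ?\<pi> p ` U' p" and ?K = "\<Union>p\<in>P. ?\<pi> p ` (U p closure_of U' p)"
  have U'_closure: "openin (U p) (U' p) \<and> compactin (U p) (U p closure_of U' p)" if "p \<in> P" for p
    using assms(4) that unfolding rel_compact_open_def by blast
  have "metrizable_space (subtopology ?Q ?K) \<and> second_countable (subtopology ?Q ?K)"
  proof (rule metrizable_second_countable_Union_compact_images[where U = U])
    show "continuous_map (U p) ?Q (?\<pi> p)" if "p \<in> P" for p
      using that by (rule continuous_map_gcs_proj)
    show "compactin (U p) (U p closure_of U' p)" if "p \<in> P" for p
      using U'_closure[OF that] by simp
  qed (use good_coord_system_strongD[OF assms(3)] in auto)
  moreover have "?T \<subseteq> ?K"
  proof (intro UN_mono image_mono order_refl)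
    show "U' p \<subseteq> U p closure_of U' p" if "p \<in> P" for p
      using U'_closure[OF that] by (simp add: closure_of_subset openin_subset)
  qed
  ultimately show ?thesis
    using separable_metrizable_subtopology_subset by blast
qed

end
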